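(* Let $I$ be a fuzzy implication function and $T$ a t-norm. If $I(1,y)\le y$ for all $y\in[0,1]$ and $I$ satisfies the monotonicity of the generalized modus ponens with respect to $T$ (i.e. $T(\tilde x,I(\tilde x,y))\le T(x,I(x,y))$ for all $x,\tilde x,y\in[0,1]$ with $\tilde x\le x$), then $I$ satisfies $T$-conditionality with respect to $T$, i.e. $T(x,I(x,y))\le y$ for all $x,y\in[0,1]$. In particular, if $I$ satisfies the left neutrality principle ($I(1,y)=y$ for all $y\in[0,1]$) and the monotonicity of the generalized modus ponens with respect to $T$, then $I$ satisfies $T$-conditionality with respect to $T$.
   Context: A fuzzy implication function is a map $I:[0,1]^2\to[0,1]$ decreasing in the first variable, increasing in the second, with $I(0,0)=I(1,1)=1$, $I(1,0)=0$. A t-norm is a commutative, associative binary operation on $[0,1]$, increasing in both variables, with neutral element $1$. *)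

theory Defs
  imports Main "HOL.Real"
begin

definition unit_closed :: "(real \<Rightarrow> real \<Rightarrow> real) \<Rightarrow> bool" where
  "unit_closed F \<longleftrightarrow> (\<forall>x\<in>{0..1}. \<forall>y\<in>{0..1}. F x y \<in> {0..1})"

definition fuzzy_implication :: "(real \<Rightarrow> real \<Rightarrow> real) \<Rightarrow> bool" where
  "fuzzy_implication I \<longleftrightarrow> unit_closed I
     \<and> (\<forall>x1\<in>{0..1}. \<forall>x2\<in>{0..1}. \<forall>y\<in>{0..1}. x1 \<le> x2 \<longrightarrow> I x2 y \<le> I x1 y)
     \<and> (\<forall>x\<in>{0..1}. \<forall>y1\<in>{0..1}. \<forall>y2\<in>{0..1}. y1 \<le> y2 \<longrightarrow> I x y1 \<le> I x y2)
     \<and> I 0 0 = 1 \<and> I 1 1 = 1 \<and> I 1 0 = 0"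

definition t_norm :: "(real \<Rightarrow> real \<Rightarrow> real) \<Rightarrow> bool" where
  "t_norm T \<longleftrightarrow> unit_closed T
     \<and> (\<forall>x\<in>{0..1}. \<forall>y\<in>{0..1}. T x y = T y x)
     \<and> (\<forall>x\<in>{0..1}. \<forall>y\<in>{0..1}. \<forall>z\<in>{0..1}. T x (T y z) = T (T x y) z)
     \<and> (\<forall>x1\<in>{0..1}. \<forall>x2\<in>{0..1}. \<forall>y\<in>{0..1}. x1 \<le> x2 \<longrightarrow> T x1 y \<le> T x2 y)
     \<and> (\<forall>x\<in>{0..1}. T x 1 = x)"

definition monotone_GMP :: "(real \<Rightarrow> real \<Rightarrow> real) \<Rightarrow> (real \<Rightarrow> real \<Rightarrow> real) \<Rightarrow> bool" where
  "monotone_GMP I T \<longleftrightarrow> (\<forall>x\<in>{0..1}. \<forall>xt\<in>{0..1}. \<forall>y\<in>{0..1}.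
      xt \<le> x \<longrightarrow> T xt (I xt y) \<le> T x (I x y))"

definition T_conditional :: "(real \<Rightarrow> real \<Rightarrow> real) \<Rightarrow> (real \<Rightarrow> real \<Rightarrow> real) \<Rightarrow> bool" where
  "T_conditional I T \<longleftrightarrow> (\<forall>x\<in>{0..1}. \<forall>y\<in>{0..1}. T x (I x y) \<le> y)"

definition left_neutral :: "(real \<Rightarrow> real \<Rightarrow> real) \<Rightarrow> bool" where
  "left_neutral I \<longleftrightarrow> (\<forall>y\<in>{0..1}. I 1 y = y)"

end

theory Submission
  imports Defs
begin

(* Monotonicity of the generalized modus ponens pushes T(x, I(x,y)) up to T(1, I(1,y)) = I(1,y),
   which is at most y by hypothesis. *)

lemma t_norm_one_left:
  assumes "t_norm T" and "y \<in> {0..1}"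
  shows "T 1 y = y"
proof -
  have "T 1 y = T y 1" using assms unfolding t_norm_def by auto
  also have "\<dots> = y" using assms unfolding t_norm_def by blast
  finally show ?thesis .
qed

lemma unit_closedD:
  assumes "unit_closed F" and "x \<in> {0..1}" and "y \<in> {0..1}"
  shows "F x y \<in> {0..1}"
  using assms unfolding unit_closed_def by blast

lemma fuzzy_implication_unit_closed: "fuzzy_implication I \<Longrightarrow> unit_closed I"
  unfolding fuzzy_implication_def by simp

lemma left_neutral_imp_le: "left_neutral I \<Longrightarrow> \<forall>y\<in>{0..1}. I 1 y \<le> y"
  unfolding left_neutral_def by simp

lemma monotone_GMP_imp_T_conditional:
  assumes "unit_closed I" and "t_norm T"
    and le: "\<forall>y\<in>{0..1}. I 1 y \<le> y" and "monotone_GMP I T"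
  shows "T_conditional I T"
  unfolding T_conditional_def
proof (intro ballI)
  fix x y :: real
  assume x: "x \<in> {0..1}" and y: "y \<in> {0..1}"
  have "T x (I x y) \<le> T 1 (I 1 y)"
    using \<open>monotone_GMP I T\<close> x y unfolding monotone_GMP_def by simp
  also have "\<dots> = I 1 y"
    using t_norm_one_left[OF \<open>t_norm T\<close> unit_closedD[OF \<open>unit_closed I\<close>]] y by simp
  also have "\<dots> \<le> y" using le y by blast
  finally show "T x (I x y) \<le> y" .
qed

theorem proposition9:
  fixes I T :: "real \<Rightarrow> real \<Rightarrow> real"
  assumes "fuzzy_implication I" and "t_norm T"
  shows "((\<forall>y\<in>{0..1}. I 1 y \<le> y) \<and> monotone_GMP I T \<longrightarrow> T_conditional I T)
       \<and> (left_neutral I \<and> monotone_GMP I T \<longrightarrow> T_conditional I T)"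
  using monotone_GMP_imp_T_conditional[OF fuzzy_implication_unit_closed[OF assms(1)] assms(2)]
    left_neutral_imp_le
  by blast

end
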